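(* Let $\Theta$ be an overconvergent Dwork operator on $A_0$. Choose rational numbers $b,c_1$ with $0<b\le b_\sigma$ such that $\Theta(X^u)\in L(qb,c_1)$ for all $u$ with $0\le u_i<q$. Then for every real number $c$, $\Theta(L(b,c))\subset L(qb,c+c_1)$.
   Context: $R$ is a complete discrete valuation ring of characteristic $0$ with uniformizer $\pi$, residue field $\mathbf{F}_q$, valuation $\mathrm{ord}_\pi$. Fix $n\ge1$; for $u\in\mathbf{Z}^n_{\ge0}$, $X^u=\prod X_i^{u_i}$, $|u|=\sum u_i$. $A_0=\{\sum a_uX^u:a_u\in R,\ \mathrm{ord}_\pi a_u\to\infty\}$, $A=\{\sum a_uX^u\in A_0:\liminf_{|u|\to\infty}\mathrm{ord}_\pi a_u/|u|>0\}$. $\sigma$ is an $R$-algebra endomorphism of $A_0$ with $\sigma(X_i)=X_i^q+\pi f_i$, $f_i\in A$. For $b>0$ and $c$, $L(b,c)=\{\sum_va_vX^v:a_v\in R,\ \mathrm{ord}_\pi a_v\ge b|v|+c\}$; $b_\sigma>0$ is a fixed rational with $\pi f_i\in L(b_\sigma,0)$ for all $i$. A Dwork operator on $A_0$ is an $R$-linear endomorphism $\Theta$ of $A_0$ with $\Theta(\sigma(a_1)a_2)=a_1\Theta(a_2)$ for $a_1,a_2\in A_0$; it is overconvergent if $\Theta(A)\subset A$. *)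

theory Defs
  imports Complex_Main
begin

(* The ring R is modelled as a type 'a of characteristic 0 (class ring_char_0),
   with valuation ord (only meaningful on nonzero elements; ord 0 = +infinity is
   handled by always guarding with "x \<noteq> 0") and uniformizer \<pi>. *)

definition complete_dvr :: "('a::{comm_ring_1,ring_char_0} \<Rightarrow> int) \<Rightarrow> 'a \<Rightarrow> nat \<Rightarrow> bool" where
  "complete_dvr ord \<pi> q \<longleftrightarrow>
     \<pi> \<noteq> 0 \<and> ord \<pi> = 1 \<and>
     (\<forall>x. x \<noteq> 0 \<longrightarrow> 0 \<le> ord x) \<and>
     (\<forall>x y. x \<noteq> 0 \<longrightarrow> y \<noteq> 0 \<longrightarrow> x * y \<noteq> 0 \<and> ord (x * y) = ord x + ord y) \<and>
     (\<forall>x y. x \<noteq> 0 \<longrightarrow> y \<noteq> 0 \<longrightarrow> x + y \<noteq> 0 \<longrightarrow> min (ord x) (ord y) \<le> ord (x + y)) \<and>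
     (\<forall>x y. x \<noteq> 0 \<longrightarrow> y \<noteq> 0 \<longrightarrow> ord y \<le> ord x \<longrightarrow> y dvd x) \<and>
     (\<forall>s :: nat \<Rightarrow> 'a. (\<forall>k::nat. \<exists>N. \<forall>m\<ge>N. \<forall>m'\<ge>N. \<pi> ^ k dvd (s m - s m'))
          \<longrightarrow> (\<exists>l. \<forall>k::nat. \<exists>N. \<forall>m\<ge>N. \<pi> ^ k dvd (s m - l))) \<and>
     (\<exists>S. finite S \<and> card S = q \<and> (\<forall>x. \<exists>!s. s \<in> S \<and> \<pi> dvd (x - s)))"

(* formal power series in the variables indexed by the finite type 'n:
   exponent vectors u :: 'n \<Rightarrow> nat, a series is its coefficient function *)

definition deg :: "('n::finite \<Rightarrow> nat) \<Rightarrow> nat" where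
  "deg u = (\<Sum>i\<in>UNIV. u i)"

definition pmonom :: "('n \<Rightarrow> nat) \<Rightarrow> ('n \<Rightarrow> nat) \<Rightarrow> 'a::comm_ring_1" where
  "pmonom u = (\<lambda>w. if w = u then 1 else 0)"

definition pone :: "('n \<Rightarrow> nat) \<Rightarrow> 'a::comm_ring_1" where
  "pone = pmonom (\<lambda>_. 0)"

definition pvar :: "'n \<Rightarrow> ('n \<Rightarrow> nat) \<Rightarrow> 'a::comm_ring_1" where
  "pvar i = pmonom (\<lambda>j. if j = i then 1 else 0)"

definition pmult :: "(('n::finite \<Rightarrow> nat) \<Rightarrow> 'a::comm_ring_1) \<Rightarrow> (('n \<Rightarrow> nat) \<Rightarrow> 'a) \<Rightarrow> ('n \<Rightarrow> nat) \<Rightarrow> 'a" where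
  "pmult f g = (\<lambda>w. \<Sum>u\<in>{u. u \<le> w}. f u * g (w - u))"

definition ppow :: "(('n::finite \<Rightarrow> nat) \<Rightarrow> 'a::comm_ring_1) \<Rightarrow> nat \<Rightarrow> ('n \<Rightarrow> nat) \<Rightarrow> 'a" where
  "ppow f k = ((pmult f) ^^ k) pone"

definition psmult :: "'a::comm_ring_1 \<Rightarrow> (('n \<Rightarrow> nat) \<Rightarrow> 'a) \<Rightarrow> ('n \<Rightarrow> nat) \<Rightarrow> 'a" where
  "psmult r f = (\<lambda>u. r * f u)"

definition padd :: "(('n \<Rightarrow> nat) \<Rightarrow> 'a::comm_ring_1) \<Rightarrow> (('n \<Rightarrow> nat) \<Rightarrow> 'a) \<Rightarrow> ('n \<Rightarrow> nat) \<Rightarrow> 'a" where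
  "padd f g = (\<lambda>u. f u + g u)"

definition A0 :: "('a::comm_ring_1 \<Rightarrow> int) \<Rightarrow> (('n \<Rightarrow> nat) \<Rightarrow> 'a) set" where
  "A0 ord = {f. \<forall>k::int. finite {u. f u \<noteq> 0 \<and> ord (f u) < k}}"

definition Aoc :: "('a::comm_ring_1 \<Rightarrow> int) \<Rightarrow> (('n::finite \<Rightarrow> nat) \<Rightarrow> 'a) set" where
  "Aoc ord = {f \<in> A0 ord. \<exists>\<epsilon>::real. \<epsilon> > 0 \<and> (\<exists>N. \<forall>u. N \<le> deg u \<longrightarrow> f u \<noteq> 0 \<longrightarrow>
        \<epsilon> * real (deg u) \<le> real_of_int (ord (f u)))}"

definition Lset :: "('a::comm_ring_1 \<Rightarrow> int) \<Rightarrow> real \<Rightarrow> real \<Rightarrow> (('n::finite \<Rightarrow> nat) \<Rightarrow> 'a) set" where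
  "Lset ord b c = {f. \<forall>v. f v \<noteq> 0 \<longrightarrow> b * real (deg v) + c \<le> real_of_int (ord (f v))}"

definition R_alg_endo :: "('a::comm_ring_1 \<Rightarrow> int) \<Rightarrow> ((('n::finite \<Rightarrow> nat) \<Rightarrow> 'a) \<Rightarrow> (('n \<Rightarrow> nat) \<Rightarrow> 'a)) \<Rightarrow> bool" where
  "R_alg_endo ord \<sigma> \<longleftrightarrow>
     (\<forall>f\<in>A0 ord. \<sigma> f \<in> A0 ord) \<and>
     (\<forall>f\<in>A0 ord. \<forall>g\<in>A0 ord. \<sigma> (padd f g) = padd (\<sigma> f) (\<sigma> g)) \<and>
     (\<forall>f\<in>A0 ord. \<forall>g\<in>A0 ord. \<sigma> (pmult f g) = pmult (\<sigma> f) (\<sigma> g)) \<and>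
     (\<forall>r. \<forall>f\<in>A0 ord. \<sigma> (psmult r f) = psmult r (\<sigma> f)) \<and>
     \<sigma> pone = pone"

definition dwork_op :: "('a::comm_ring_1 \<Rightarrow> int) \<Rightarrow> ((('n::finite \<Rightarrow> nat) \<Rightarrow> 'a) \<Rightarrow> (('n \<Rightarrow> nat) \<Rightarrow> 'a))
     \<Rightarrow> ((('n \<Rightarrow> nat) \<Rightarrow> 'a) \<Rightarrow> (('n \<Rightarrow> nat) \<Rightarrow> 'a)) \<Rightarrow> bool" where
  "dwork_op ord \<sigma> \<Theta> \<longleftrightarrow>
     (\<forall>f\<in>A0 ord. \<Theta> f \<in> A0 ord) \<and>
     (\<forall>f\<in>A0 ord. \<forall>g\<in>A0 ord. \<Theta> (padd f g) = padd (\<Theta> f) (\<Theta> g)) \<and>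
     (\<forall>r. \<forall>f\<in>A0 ord. \<Theta> (psmult r f) = psmult r (\<Theta> f)) \<and>
     (\<forall>a1\<in>A0 ord. \<forall>a2\<in>A0 ord. \<Theta> (pmult (\<sigma> a1) a2) = pmult a1 (\<Theta> a2))"

definition overconvergent :: "('a::comm_ring_1 \<Rightarrow> int) \<Rightarrow> ((('n::finite \<Rightarrow> nat) \<Rightarrow> 'a) \<Rightarrow> (('n \<Rightarrow> nat) \<Rightarrow> 'a)) \<Rightarrow> bool" where
  "overconvergent ord \<Theta> \<longleftrightarrow> (\<forall>f\<in>Aoc ord. \<Theta> f \<in> Aoc ord)"

end

theory Submission
  imports Defs "HOL-Library.FuncSet" "HOL-Library.Function_Algebras"
begin

(* Write an exponent as v = u + q w with 0 \<le> u_i < q. Since \<sigma>(X^w) = X^(qw) + D(w) with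
   D(w) = frob_defect w \<in> L(b, qb - qb|w|), the Dwork property gives
     \<Theta>(X^v) = X^w \<Theta>(X^u) - \<Theta>(D(w) X^u),
   where X^w \<Theta>(X^u) \<in> L(qb, c1 - qb|w|) and D(w) X^u \<in> L(b, qb - b|v|). Hence for
   g \<in> L(b,c) with finite support, \<Theta> g \<in> L(qb, c + c1) + \<Theta>(L(b, c + qb)): the error term
   gains qb in the constant. \<Theta> is only finitely additive, so a general g is split into a
   finite part and a tail in L(0, r) \<inter> A_0 = \<pi>^\<lceil>r\<rceil> A_0 (r > 0), which \<Theta> preserves by
   R-linearity. Iterating K times approximates \<Theta> g modulo L(0, c + Kqb) by elements of
   L(qb, c + c1), and L(qb, c + c1) is closed under such approximation. *)

lemma finite_exps_le: "finite {u::'n::finite \<Rightarrow> nat. u \<le> w}"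
proof (rule finite_subset)
  show "{u::'n \<Rightarrow> nat. u \<le> w} \<subseteq> PiE UNIV (\<lambda>i. {..w i})"
    by (auto simp: le_fun_def PiE_UNIV_domain)
qed (simp add: finite_PiE)

lemma deg_add: "deg (u + v) = deg u + deg v"
  by (simp add: deg_def sum.distrib)

lemma deg_scale: "deg (\<lambda>i. k * w i) = k * deg w"
  by (simp add: deg_def sum_distrib_left)

lemma deg_le_diff: "(u::'n::finite \<Rightarrow> nat) \<le> w \<Longrightarrow> deg u + deg (w - u) = deg w"
proof -
  assume "u \<le> w"
  then have "u + (w - u) = w"
    by (auto simp: le_fun_def fun_eq_iff)
  then show ?thesis
    by (metis deg_add)
qed

lemma finite_deg_le: "finite {v::'n::finite \<Rightarrow> nat. deg v \<le> N}"
proof (rule finite_subset)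
  have "v i \<le> deg v" for v :: "'n \<Rightarrow> nat" and i
    unfolding deg_def by (rule member_le_sum) auto
  then show "{v::'n \<Rightarrow> nat. deg v \<le> N} \<subseteq> {u. u \<le> (\<lambda>_. N)}"
    by (auto simp: le_fun_def intro: order_trans)
qed (rule finite_exps_le)

definition unit_exp :: "'n \<Rightarrow> 'n \<Rightarrow> nat" where
  "unit_exp i = (\<lambda>j. if j = i then 1 else 0)"

lemma deg_unit_exp: "deg (unit_exp i :: 'n::finite \<Rightarrow> nat) = 1"
  by (simp add: deg_def unit_exp_def)

lemma deg_Suc_split:
  assumes "deg (w :: 'n::finite \<Rightarrow> nat) = Suc n"
  obtains i w' where "w = w' + unit_exp i" and "deg w' = n"
proof -
  obtain i where "w i > 0"
  proof (rule ccontr)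
    assume "\<not> thesis"
    with that have "w = (\<lambda>_. 0)"
      by (auto simp: fun_eq_iff)
    with assms show False
      by (simp add: deg_def)
  qed
  then have w: "w = (w - unit_exp i) + unit_exp i"
    by (auto simp: unit_exp_def fun_eq_iff)
  then have "deg w = deg (w - unit_exp i) + 1"
    by (metis deg_add deg_unit_exp)
  with assms have "deg (w - unit_exp i) = n"
    by simp
  with w show thesis
    by (rule that)
qed

lemma padd_eq_plus: "padd f g = f + g"
  by (simp add: padd_def fun_eq_iff)

lemma pmult_pmonom_left:
  "pmult (pmonom a) F w = (if a \<le> w then F (w - a) else (0::'a::comm_ring_1))"
proof -
  have "pmult (pmonom a) F w = (\<Sum>u\<in>{u. u \<le> w}. if u = a then F (w - a) else 0)"
    unfolding pmult_def pmonom_def by (rule sum.cong) auto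
  then show ?thesis
    by (simp add: sum.delta[OF finite_exps_le])
qed

lemma pmult_pmonom_pmonom: "pmult (pmonom a) (pmonom b) = (pmonom (a + b) :: _ \<Rightarrow> 'a::comm_ring_1)"
proof
  fix w
  have "a i \<le> w i \<and> w i - a i = b i \<longleftrightarrow> w i = a i + b i" for i
    by auto
  then have "a \<le> w \<and> w - a = b \<longleftrightarrow> w = a + b"
    by (auto simp: le_fun_def fun_eq_iff)
  then show "pmult (pmonom a) (pmonom b) w = (pmonom (a + b) :: _ \<Rightarrow> 'a) w"
    by (simp only: pmult_pmonom_left) (auto simp: pmonom_def)
qed

lemma fun_diff_eq_iff:
  fixes u w a :: "'n \<Rightarrow> nat"
  assumes "u \<le> w"
  shows "w - u = a \<longleftrightarrow> a \<le> w \<and> u = w - a"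
proof -
  have "u i \<le> w i" for i
    using assms by (simp add: le_fun_def)
  then have "w i - u i = a i \<longleftrightarrow> a i \<le> w i \<and> u i = w i - a i" for i
    by (metis diff_diff_cancel diff_le_self)
  then show ?thesis
    by (auto simp: le_fun_def fun_eq_iff)
qed

lemma pmult_pmonom_right:
  "pmult F (pmonom a) w = (if a \<le> w then F (w - a) else (0::'a::comm_ring_1))"
proof -
  have "pmult F (pmonom a) w = (\<Sum>u\<in>{u. u \<le> w}. if u = w - a then (if a \<le> w then F u else 0) else 0)"
    unfolding pmult_def pmonom_def by (rule sum.cong) (auto simp: fun_diff_eq_iff)
  moreover have "w - a \<le> w"
    by (simp add: le_fun_def)
  ultimately show ?thesis
    by (simp add: sum.delta[OF finite_exps_le])
qed

lemma pmult_add_left: "pmult (F + G) H = pmult F H + (pmult G H :: _ \<Rightarrow> 'a::comm_ring_1)"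
  by (simp add: pmult_def fun_eq_iff algebra_simps sum.distrib)

lemma pmult_add_right: "pmult H (F + G) = pmult H F + (pmult H G :: _ \<Rightarrow> 'a::comm_ring_1)"
  by (simp add: pmult_def fun_eq_iff algebra_simps sum.distrib)

lemma ppow_pmonom: "ppow (pmonom a) k = (pmonom (\<lambda>i. k * a i) :: _ \<Rightarrow> 'a::comm_ring_1)"
proof (induction k)
  case 0
  then show ?case by (simp add: ppow_def pone_def)
next
  case (Suc k)
  then show ?case
    by (simp add: ppow_def pmult_pmonom_pmonom plus_fun_def)
qed

lemma psmult_diff: "psmult r F - psmult r G = psmult r (F - G)"
  by (simp add: psmult_def fun_eq_iff right_diff_distrib)

lemma pmonom_sum_eq:
  assumes "finite S" and "\<And>v. v \<notin> S \<Longrightarrow> g v = 0"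
  shows "(\<Sum>v\<in>S. psmult (g v) (pmonom v)) = (g :: _ \<Rightarrow> 'a::comm_ring_1)"
proof
  fix z
  have "(\<Sum>v\<in>S. psmult (g v) (pmonom v)) z = (\<Sum>v\<in>S. if z = v then g z else 0)"
    by (induction S rule: infinite_finite_induct) (auto simp: psmult_def pmonom_def)
  then show "(\<Sum>v\<in>S. psmult (g v) (pmonom v)) z = g z"
    using assms by (simp add: sum.delta)
qed

definition ord_ge :: "('a::comm_ring_1 \<Rightarrow> int) \<Rightarrow> real \<Rightarrow> 'a \<Rightarrow> bool" where
  "ord_ge ord r a \<longleftrightarrow> a = 0 \<or> r \<le> real_of_int (ord a)"

lemma Lset_iff: "F \<in> Lset ord b c \<longleftrightarrow> (\<forall>v. ord_ge ord (b * real (deg v) + c) (F v))"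
  by (auto simp: Lset_def ord_ge_def)

lemma ord_ge_zero [simp]: "ord_ge ord r 0"
  by (simp add: ord_ge_def)

lemma ord_ge_mono: "ord_ge ord r a \<Longrightarrow> r' \<le> r \<Longrightarrow> ord_ge ord r' a"
  by (auto simp: ord_ge_def)

lemma Lset_zero: "0 \<in> Lset ord b c"
  by (simp add: Lset_iff)

lemma Lset_antimono:
  assumes "b' \<le> b" and "c' \<le> c"
  shows "Lset ord b c \<subseteq> (Lset ord b' c' :: (('n::finite \<Rightarrow> nat) \<Rightarrow> 'a::comm_ring_1) set)"
proof
  fix F :: "('n \<Rightarrow> nat) \<Rightarrow> 'a"
  assume F: "F \<in> Lset ord b c"
  show "F \<in> Lset ord b' c'"
    unfolding Lset_iff
  proof
    fix v :: "'n \<Rightarrow> nat"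
    have "b' * real (deg v) + c' \<le> b * real (deg v) + c"
      using assms by (intro add_mono mult_right_mono) auto
    with F show "ord_ge ord (b' * real (deg v) + c') (F v)"
      unfolding Lset_iff by (blast intro: ord_ge_mono)
  qed
qed

lemma Lset_restrict: "F \<in> Lset ord b c \<Longrightarrow> (\<lambda>v. if P v then F v else 0) \<in> Lset ord b c"
  by (simp add: Lset_iff)

lemma A0_zero: "0 \<in> A0 ord"
  by (simp add: A0_def)

lemma A0_pmonom: "(pmonom a :: _ \<Rightarrow> 'a::comm_ring_1) \<in> A0 ord"
proof -
  have "{u. pmonom a u \<noteq> (0::'a) \<and> ord (pmonom a u) < k} \<subseteq> {a}" for k
    by (auto simp: pmonom_def)
  then show ?thesis
    unfolding A0_def by (auto intro: finite_subset)
qed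

lemma A0_pmult_pmonom:
  fixes F :: "('n::finite \<Rightarrow> nat) \<Rightarrow> 'a::comm_ring_1"
  assumes "F \<in> A0 ord"
  shows "pmult F (pmonom a) \<in> A0 ord"
  unfolding A0_def mem_Collect_eq
proof
  fix k :: int
  let ?small = "\<lambda>G. {u. G u \<noteq> 0 \<and> ord (G u) < k}"
  have "?small (pmult F (pmonom a)) \<subseteq> (\<lambda>x. x + a) ` ?small F"
  proof
    fix u
    assume u: "u \<in> ?small (pmult F (pmonom a))"
    then have "a \<le> u"
      by (metis (mono_tags, lifting) mem_Collect_eq pmult_pmonom_right)
    with u have "u - a \<in> ?small F"
      by (simp add: pmult_pmonom_right)
    moreover from \<open>a \<le> u\<close> have "u = (u - a) + a"
      by (auto simp: le_fun_def fun_eq_iff)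
    ultimately show "u \<in> (\<lambda>x. x + a) ` ?small F"
      by blast
  qed
  moreover have "finite (?small F)"
    using assms by (simp add: A0_def)
  ultimately show "finite (?small (pmult F (pmonom a)))"
    by (rule finite_subset[OF _ finite_imageI])
qed

locale valued_ring =
  fixes ord :: "'a::comm_ring_1 \<Rightarrow> int" and \<pi> :: 'a
  assumes ord_nonneg: "x \<noteq> 0 \<Longrightarrow> 0 \<le> ord x"
    and ord_mult: "x \<noteq> 0 \<Longrightarrow> y \<noteq> 0 \<Longrightarrow> x * y \<noteq> 0 \<and> ord (x * y) = ord x + ord y"
    and ord_add: "x \<noteq> 0 \<Longrightarrow> y \<noteq> 0 \<Longrightarrow> x + y \<noteq> 0 \<Longrightarrow> min (ord x) (ord y) \<le> ord (x + y)"
    and ord_dvd: "x \<noteq> 0 \<Longrightarrow> y \<noteq> 0 \<Longrightarrow> ord y \<le> ord x \<Longrightarrow> y dvd x"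
    and pi_nonzero: "\<pi> \<noteq> 0"
    and ord_pi: "ord \<pi> = 1"

lemma complete_dvr_valued_ring: "complete_dvr ord \<pi> q \<Longrightarrow> valued_ring ord \<pi>"
  by unfold_locales (simp_all add: complete_dvr_def)

lemma complete_dvr_residue_card_pos: "complete_dvr ord \<pi> q \<Longrightarrow> 0 < q"
proof -
  assume "complete_dvr ord \<pi> q"
  then obtain S :: "'a set" where "finite S" "card S = q" "\<forall>x. \<exists>!s. s \<in> S \<and> \<pi> dvd (x - s)"
    unfolding complete_dvr_def by blast
  then show "0 < q"
    by (metis card_gt_0_iff empty_iff)
qed

context valued_ring
begin

lemma ord_one: "ord 1 = 0"
  using ord_mult[of 1 1] by simp

lemma ord_uminus: "x \<noteq> 0 \<Longrightarrow> ord (- x) = ord x"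
proof -
  have "ord (- 1) + ord (- 1) = 0"
    using ord_mult[of "- 1" "- 1"] ord_one by simp
  then show "x \<noteq> 0 \<Longrightarrow> ord (- x) = ord x"
    using ord_mult[of "- 1" x] by simp
qed

lemma ord_pi_power: "\<pi> ^ M \<noteq> 0 \<and> ord (\<pi> ^ M) = int M"
proof (induction M)
  case 0
  then show ?case by (simp add: ord_one)
next
  case (Suc M)
  then show ?case
    using ord_mult[of \<pi> "\<pi> ^ M"] pi_nonzero ord_pi by simp
qed

lemma ord_ge_nonneg: "ord_ge ord 0 a"
  using ord_nonneg[of a] by (auto simp: ord_ge_def)

lemma ord_ge_add: "ord_ge ord r a \<Longrightarrow> ord_ge ord r b \<Longrightarrow> ord_ge ord r (a + b)"
  unfolding ord_ge_def using ord_add[of a b]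
  by (cases "a = 0"; cases "b = 0"; cases "a + b = 0") (auto simp: min_def split: if_splits)

lemma ord_ge_uminus: "ord_ge ord r a \<Longrightarrow> ord_ge ord r (- a)"
  by (cases "a = 0") (auto simp: ord_ge_def ord_uminus)

lemma ord_ge_sum: "(\<And>x. x \<in> S \<Longrightarrow> ord_ge ord r (g x)) \<Longrightarrow> ord_ge ord r (\<Sum>x\<in>S. g x)"
  by (induction S rule: infinite_finite_induct) (auto intro: ord_ge_add)

lemma ord_ge_mult: "ord_ge ord r a \<Longrightarrow> ord_ge ord s b \<Longrightarrow> ord_ge ord (r + s) (a * b)"
  unfolding ord_ge_def using ord_mult[of a b] by (cases "a = 0"; cases "b = 0") auto

lemma Lset_add: "F \<in> Lset ord b c \<Longrightarrow> G \<in> Lset ord b c \<Longrightarrow> F + G \<in> Lset ord b c"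
  by (simp add: Lset_iff ord_ge_add)

lemma Lset_uminus: "F \<in> Lset ord b c \<Longrightarrow> - F \<in> Lset ord b c"
  by (simp add: Lset_iff ord_ge_uminus)

lemma Lset_sum: "(\<And>x. x \<in> S \<Longrightarrow> g x \<in> Lset ord b c) \<Longrightarrow> (\<Sum>x\<in>S. g x) \<in> Lset ord b c"
  by (induction S rule: infinite_finite_induct) (auto intro: Lset_add Lset_zero)

lemma Lset_zero_slope_nonpos: "r \<le> 0 \<Longrightarrow> F \<in> Lset ord 0 r"
  by (auto simp: Lset_iff intro: ord_ge_mono[OF ord_ge_nonneg])

lemma Lset_pmonom: "pmonom a \<in> Lset ord b (- b * real (deg a))"
  by (auto simp: Lset_def pmonom_def ord_one)

lemma Lset_psmult:
  assumes "ord_ge ord r a" and "F \<in> Lset ord b c"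
  shows "psmult a F \<in> Lset ord b (c + r)"
  unfolding Lset_iff psmult_def
proof
  fix v
  have "ord_ge ord (r + (b * real (deg v) + c)) (a * F v)"
    using assms by (intro ord_ge_mult) (auto simp: Lset_iff)
  then show "ord_ge ord (b * real (deg v) + (c + r)) (a * F v)"
    by (simp add: algebra_simps)
qed

lemma Lset_pmult:
  fixes F G :: "('n::finite \<Rightarrow> nat) \<Rightarrow> 'a"
  assumes F: "F \<in> Lset ord b c" and G: "G \<in> Lset ord b c'"
  shows "pmult F G \<in> Lset ord b (c + c')"
  unfolding Lset_iff pmult_def
proof
  fix w :: "'n \<Rightarrow> nat"
  show "ord_ge ord (b * real (deg w) + (c + c')) (\<Sum>u\<in>{u. u \<le> w}. F u * G (w - u))"
  proof (rule ord_ge_sum)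
    fix u assume "u \<in> {u. u \<le> w}"
    then have "real (deg u) + real (deg (w - u)) = real (deg w)"
      by (metis deg_le_diff mem_Collect_eq of_nat_add)
    then have "b * real (deg w) + (c + c') = (b * real (deg u) + c) + (b * real (deg (w - u)) + c')"
      by (metis add.assoc add.left_commute distrib_left)
    moreover have "ord_ge ord ((b * real (deg u) + c) + (b * real (deg (w - u)) + c')) (F u * G (w - u))"
      using F G by (intro ord_ge_mult) (auto simp: Lset_iff)
    ultimately show "ord_ge ord (b * real (deg w) + (c + c')) (F u * G (w - u))"
      by (simp only:)
  qed
qed

lemma Lset_closed:
  fixes F :: "('n::finite \<Rightarrow> nat) \<Rightarrow> 'a"
  assumes approx: "\<And>N. \<exists>p\<in>Lset ord b c. F - p \<in> Lset ord 0 N"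
  shows "F \<in> Lset ord b c"
  unfolding Lset_iff
proof
  fix v :: "'n \<Rightarrow> nat"
  obtain p where p: "p \<in> Lset ord b c" and Fp: "F - p \<in> Lset ord 0 (b * real (deg v) + c)"
    using approx by blast
  have "ord_ge ord (b * real (deg v) + c) ((F v - p v) + p v)"
    using p Fp by (intro ord_ge_add) (auto simp: Lset_iff)
  then show "ord_ge ord (b * real (deg v) + c) (F v)"
    by simp
qed

lemma A0_add:
  assumes F: "F \<in> A0 ord" and G: "G \<in> A0 ord"
  shows "F + G \<in> A0 ord"
  unfolding A0_def mem_Collect_eq
proof
  fix k :: int
  let ?small = "\<lambda>H. {u. H u \<noteq> 0 \<and> ord (H u) < k}"
  have "?small (F + G) \<subseteq> ?small F \<union> ?small G"
  proof
    fix u assume u: "u \<in> ?small (F + G)"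
    then have "\<not> (F u = 0 \<or> ord (F u) \<ge> k) \<or> \<not> (G u = 0 \<or> ord (G u) \<ge> k)"
      using ord_add[of "F u" "G u"]
      by (cases "F u = 0"; cases "G u = 0") (auto simp: min_def split: if_splits)
    then show "u \<in> ?small F \<union> ?small G"
      by auto
  qed
  moreover have "finite (?small F)" "finite (?small G)"
    using F G by (simp_all add: A0_def)
  ultimately show "finite (?small (F + G))"
    by (meson finite_Un finite_subset)
qed

lemma A0_sum: "(\<And>x. x \<in> S \<Longrightarrow> g x \<in> A0 ord) \<Longrightarrow> (\<Sum>x\<in>S. g x) \<in> A0 ord"
  by (induction S rule: infinite_finite_induct) (auto intro: A0_add A0_zero)

lemma A0_psmult:
  assumes F: "F \<in> A0 ord"
  shows "psmult r F \<in> A0 ord"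
  unfolding A0_def mem_Collect_eq
proof
  fix k :: int
  have "{u. psmult r F u \<noteq> 0 \<and> ord (psmult r F u) < k} \<subseteq> {u. F u \<noteq> 0 \<and> ord (F u) < k}"
  proof
    fix u assume "u \<in> {u. psmult r F u \<noteq> 0 \<and> ord (psmult r F u) < k}"
    then have "r \<noteq> 0" "F u \<noteq> 0" "ord (r * F u) < k"
      by (auto simp: psmult_def)
    then show "u \<in> {u. F u \<noteq> 0 \<and> ord (F u) < k}"
      using ord_mult[of r "F u"] ord_nonneg[of r] by auto
  qed
  then show "finite {u. psmult r F u \<noteq> 0 \<and> ord (psmult r F u) < k}"
    using F unfolding A0_def by (auto intro: finite_subset)
qed

lemma Lset_subset_A0:
  assumes "b > 0"
  shows "Lset ord b c \<subseteq> (A0 ord :: (('n::finite \<Rightarrow> nat) \<Rightarrow> 'a) set)"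
proof
  fix F :: "('n \<Rightarrow> nat) \<Rightarrow> 'a"
  assume F: "F \<in> Lset ord b c"
  show "F \<in> A0 ord"
    unfolding A0_def mem_Collect_eq
  proof
    fix k :: int
    have "{u. F u \<noteq> 0 \<and> ord (F u) < k} \<subseteq> {v. deg v \<le> nat \<lceil>(k - c) / b\<rceil>}"
    proof
      fix u assume "u \<in> {u. F u \<noteq> 0 \<and> ord (F u) < k}"
      then have "b * real (deg u) + c < k"
        using F unfolding Lset_def by force
      then have "real (deg u) < (k - c) / b"
        using assms by (simp add: field_simps)
      then show "u \<in> {v. deg v \<le> nat \<lceil>(k - c) / b\<rceil>}"
        by simp linarith
    qed
    then show "finite {u. F u \<noteq> 0 \<and> ord (F u) < k}"
      using finite_deg_le by (rule finite_subset)
  qed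
qed

lemma A0_small_outside_finite:
  fixes F :: "('n::finite \<Rightarrow> nat) \<Rightarrow> 'a"
  assumes "F \<in> A0 ord"
  obtains S where "finite S" and "(\<lambda>v. if v \<notin> S then F v else 0) \<in> Lset ord 0 r"
proof
  let ?S = "{v. F v \<noteq> 0 \<and> ord (F v) < \<lceil>r\<rceil>}"
  show "finite ?S"
    using assms by (simp add: A0_def)
  show "(\<lambda>v. if v \<notin> ?S then F v else 0) \<in> Lset ord 0 r"
    unfolding Lset_iff ord_ge_def by (simp add: not_less ceiling_le_iff)
qed

lemma A0_pi_power_dvd:
  fixes F :: "('n::finite \<Rightarrow> nat) \<Rightarrow> 'a"
  assumes F: "F \<in> A0 ord" and F_small: "F \<in> Lset ord 0 (real M)"
  obtains H where "H \<in> A0 ord" and "F = psmult (\<pi> ^ M) H"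
proof
  define H where "H u = (if F u = 0 then 0 else SOME h. F u = \<pi> ^ M * h)" for u
  show FH: "F = psmult (\<pi> ^ M) H"
  proof
    fix u
    show "F u = psmult (\<pi> ^ M) H u"
    proof (cases "F u = 0")
      case True
      then show ?thesis by (simp add: H_def psmult_def)
    next
      case False
      then have "real M \<le> real_of_int (ord (F u))"
        using F_small unfolding Lset_iff ord_ge_def by auto
      then have "int M \<le> ord (F u)"
        by linarith
      then have "\<pi> ^ M dvd F u"
        using ord_dvd[of "F u" "\<pi> ^ M"] ord_pi_power[of M] False by simp
      then have "\<exists>h. F u = \<pi> ^ M * h"
        by (auto simp: dvd_def)
      then show ?thesis
        using False unfolding H_def psmult_def by (auto intro: someI_ex)
    qed
  qed
  show "H \<in> A0 ord"
    unfolding A0_def mem_Collect_eq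
  proof
    fix k :: int
    have "{u. H u \<noteq> 0 \<and> ord (H u) < k} \<subseteq> {u. F u \<noteq> 0 \<and> ord (F u) < k + int M}"
    proof
      fix u assume u: "u \<in> {u. H u \<noteq> 0 \<and> ord (H u) < k}"
      then have "F u \<noteq> 0 \<and> ord (F u) = int M + ord (H u)"
        using FH ord_mult[of "\<pi> ^ M" "H u"] ord_pi_power[of M] by (auto simp: psmult_def)
      with u show "u \<in> {u. F u \<noteq> 0 \<and> ord (F u) < k + int M}"
        by auto
    qed
    moreover have "finite {u. F u \<noteq> 0 \<and> ord (F u) < k + int M}"
      using F by (simp add: A0_def)
    ultimately show "finite {u. H u \<noteq> 0 \<and> ord (H u) < k}"
      by (rule finite_subset)
  qed
qed

end

locale frobenius_lift = valued_ring ord \<pi>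
  for ord :: "'a::comm_ring_1 \<Rightarrow> int" and \<pi> :: 'a +
  fixes \<sigma> :: "(('n::finite \<Rightarrow> nat) \<Rightarrow> 'a) \<Rightarrow> (('n \<Rightarrow> nat) \<Rightarrow> 'a)"
    and q :: nat and b :: real
  assumes \<sigma>_endo: "R_alg_endo ord \<sigma>"
    and \<sigma>_pvar: "\<And>i. \<sigma> (pvar i) - ppow (pvar i) q \<in> Lset ord b 0"
    and q_pos: "0 < q"
    and b_pos: "0 < b"
begin

lemma \<sigma>_A0: "F \<in> A0 ord \<Longrightarrow> \<sigma> F \<in> A0 ord"
  using \<sigma>_endo by (simp add: R_alg_endo_def)

lemma \<sigma>_pmult: "F \<in> A0 ord \<Longrightarrow> G \<in> A0 ord \<Longrightarrow> \<sigma> (pmult F G) = pmult (\<sigma> F) (\<sigma> G)"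
  using \<sigma>_endo by (simp add: R_alg_endo_def)

lemma \<sigma>_pone: "\<sigma> pone = pone"
  using \<sigma>_endo by (simp add: R_alg_endo_def)

definition frob_defect :: "('n \<Rightarrow> nat) \<Rightarrow> ('n \<Rightarrow> nat) \<Rightarrow> 'a" where
  "frob_defect w = \<sigma> (pmonom w) - pmonom (\<lambda>i. q * w i)"

lemma frob_defect_add:
  "frob_defect (u + w) =
     pmult (pmonom (\<lambda>i. q * u i)) (frob_defect w) + pmult (frob_defect u) (pmonom (\<lambda>i. q * w i))
     + pmult (frob_defect u) (frob_defect w)"
proof -
  let ?A = "pmonom (\<lambda>i. q * u i) :: ('n \<Rightarrow> nat) \<Rightarrow> 'a" and ?B = "pmonom (\<lambda>i. q * w i)"
  have "(\<lambda>i. q * u i) + (\<lambda>i. q * w i) = (\<lambda>i. q * (u + w) i)"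
    by (simp add: fun_eq_iff algebra_simps)
  then have AB: "pmult ?A ?B = pmonom (\<lambda>i. q * (u + w) i)"
    by (simp add: pmult_pmonom_pmonom)
  have "\<sigma> (pmonom (u + w)) = pmult (?A + frob_defect u) (?B + frob_defect w)"
    by (simp add: pmult_pmonom_pmonom[symmetric] \<sigma>_pmult A0_pmonom frob_defect_def)
  also have "\<dots> = pmult ?A ?B + (pmult ?A (frob_defect w) + pmult (frob_defect u) ?B
                   + pmult (frob_defect u) (frob_defect w))"
    by (simp add: pmult_add_left pmult_add_right algebra_simps)
  finally show ?thesis
    unfolding frob_defect_def[of "u + w"] AB by simp
qed

lemma frob_defect_unit_exp: "frob_defect (unit_exp i) \<in> Lset ord b 0"
  using \<sigma>_pvar[of i]
  by (simp add: frob_defect_def pvar_def unit_exp_def[symmetric] ppow_pmonom)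

lemma frob_defect_Lset: "frob_defect w \<in> Lset ord b (q * b - q * b * deg w)"
proof (induction "deg w" arbitrary: w)
  case 0
  then have "w = (\<lambda>_. 0)"
    by (simp add: deg_def fun_eq_iff)
  then have "frob_defect w = 0"
    by (simp add: frob_defect_def pone_def[symmetric] \<sigma>_pone)
  then show ?case
    by (metis Lset_zero)
next
  case (Suc n)
  obtain i w' where w: "w = w' + unit_exp i" and n: "deg w' = n"
    using deg_Suc_split[OF Suc.hyps(2)[symmetric]] .
  let ?c = "q * b - q * b * deg w"
  have qb: "0 \<le> real q * b"
    using b_pos by simp
  have D': "frob_defect w' \<in> Lset ord b (q * b - q * b * n)"
    using Suc.hyps(1)[of w'] n by simp
  have D: "frob_defect (unit_exp i) \<in> Lset ord b 0"
    by (rule frob_defect_unit_exp)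
  have A: "pmonom (\<lambda>j. q * w' j) \<in> Lset ord b (- (q * b * n))"
    using Lset_pmonom[of "\<lambda>j. q * w' j" b] by (simp add: deg_scale n mult_ac)
  have B: "pmonom (\<lambda>j. q * unit_exp i j) \<in> Lset ord b (- (q * b))"
    using Lset_pmonom[of "\<lambda>j. q * unit_exp i j" b] by (simp add: deg_scale deg_unit_exp mult_ac)
  have c: "?c = - (q * b * n)"
    by (simp flip: Suc.hyps(2) add: algebra_simps)
  have "pmult (pmonom (\<lambda>j. q * w' j)) (frob_defect (unit_exp i)) \<in> Lset ord b ?c"
    using Lset_pmult[OF A D] c by simp
  moreover have "pmult (frob_defect w') (pmonom (\<lambda>j. q * unit_exp i j)) \<in> Lset ord b ?c"
    using Lset_pmult[OF D' B] unfolding c by (simp add: algebra_simps)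
  moreover have "pmult (frob_defect w') (frob_defect (unit_exp i)) \<in> Lset ord b ?c"
  proof -
    have "?c \<le> q * b - q * b * n + 0"
      using c qb by simp
    then show ?thesis
      using Lset_pmult[OF D' D] Lset_antimono[of b b ?c] by blast
  qed
  ultimately show ?case
    unfolding w frob_defect_add by (intro Lset_add)
qed

definition exp_rem :: "('n \<Rightarrow> nat) \<Rightarrow> 'n \<Rightarrow> nat" where
  "exp_rem v = (\<lambda>i. v i mod q)"

definition exp_quot :: "('n \<Rightarrow> nat) \<Rightarrow> 'n \<Rightarrow> nat" where
  "exp_quot v = (\<lambda>i. v i div q)"

lemma exp_rem_less: "exp_rem v i < q"
  using q_pos by (simp add: exp_rem_def)

lemma exp_rem_quot: "exp_rem v + (\<lambda>i. q * exp_quot v i) = v"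
  by (simp add: exp_rem_def exp_quot_def fun_eq_iff)

lemma real_deg_rem_quot: "real (deg v) = real (deg (exp_rem v)) + real q * real (deg (exp_quot v))"
  by (metis exp_rem_quot deg_add deg_scale of_nat_add of_nat_mult)

lemma pmonom_rem_quot:
  "pmonom v = pmult (\<sigma> (pmonom (exp_quot v))) (pmonom (exp_rem v))
                - pmult (frob_defect (exp_quot v)) (pmonom (exp_rem v))"
proof -
  have "\<sigma> (pmonom (exp_quot v)) = pmonom (\<lambda>i. q * exp_quot v i) + frob_defect (exp_quot v)"
    by (simp add: frob_defect_def)
  then show ?thesis
    using exp_rem_quot[of v] by (simp add: pmult_add_left pmult_pmonom_pmonom add.commute)
qed

lemma Lset_defect_term:
  assumes "ord_ge ord (b * real (deg v) + c) a"
  shows "psmult a (pmult (frob_defect (exp_quot v)) (pmonom (exp_rem v))) \<in> Lset ord b (c + q * b)"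
proof -
  have "pmult (frob_defect (exp_quot v)) (pmonom (exp_rem v))
          \<in> Lset ord b ((q * b - q * b * deg (exp_quot v)) + (- b * deg (exp_rem v)))"
    by (rule Lset_pmult[OF frob_defect_Lset Lset_pmonom])
  then have "psmult a (pmult (frob_defect (exp_quot v)) (pmonom (exp_rem v)))
          \<in> Lset ord b ((q * b - q * b * deg (exp_quot v)) + (- b * deg (exp_rem v))
                        + (b * real (deg v) + c))"
    by (rule Lset_psmult[OF assms])
  moreover have "(q * b - q * b * deg (exp_quot v)) + (- b * deg (exp_rem v)) + (b * real (deg v) + c)
                  = c + q * b"
    unfolding real_deg_rem_quot[of v] by (simp add: algebra_simps)
  ultimately show ?thesis
    by (simp only:)
qed

end

locale dwork_operator = frobenius_lift ord \<pi> \<sigma> q b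
  for ord :: "'a::comm_ring_1 \<Rightarrow> int" and \<pi> :: 'a
    and \<sigma> :: "(('n::finite \<Rightarrow> nat) \<Rightarrow> 'a) \<Rightarrow> (('n \<Rightarrow> nat) \<Rightarrow> 'a)"
    and q :: nat and b :: real +
  fixes \<Theta> :: "(('n \<Rightarrow> nat) \<Rightarrow> 'a) \<Rightarrow> (('n \<Rightarrow> nat) \<Rightarrow> 'a)"
  assumes \<Theta>_dwork: "dwork_op ord \<sigma> \<Theta>"
begin

lemma \<Theta>_add: "F \<in> A0 ord \<Longrightarrow> G \<in> A0 ord \<Longrightarrow> \<Theta> (F + G) = \<Theta> F + \<Theta> G"
  using \<Theta>_dwork by (simp add: dwork_op_def padd_eq_plus)

lemma \<Theta>_psmult: "F \<in> A0 ord \<Longrightarrow> \<Theta> (psmult r F) = psmult r (\<Theta> F)"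
  using \<Theta>_dwork by (simp add: dwork_op_def)

lemma \<Theta>_pmult_\<sigma>: "F \<in> A0 ord \<Longrightarrow> G \<in> A0 ord \<Longrightarrow> \<Theta> (pmult (\<sigma> F) G) = pmult F (\<Theta> G)"
  using \<Theta>_dwork by (simp add: dwork_op_def)

lemma \<Theta>_zero: "\<Theta> 0 = 0"
proof -
  have "psmult 0 F = 0" for F :: "('n \<Rightarrow> nat) \<Rightarrow> 'a"
    by (simp add: psmult_def fun_eq_iff)
  then show ?thesis
    using \<Theta>_psmult[OF A0_zero, of 0] by simp
qed

lemma \<Theta>_sum: "(\<And>x. x \<in> S \<Longrightarrow> g x \<in> A0 ord) \<Longrightarrow> \<Theta> (\<Sum>x\<in>S. g x) = (\<Sum>x\<in>S. \<Theta> (g x))"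
proof (induction S rule: infinite_finite_induct)
  case (insert x S)
  then have IH: "\<Theta> (\<Sum>x\<in>S. g x) = (\<Sum>x\<in>S. \<Theta> (g x))"
    by simp
  have "\<Theta> (g x + (\<Sum>x\<in>S. g x)) = \<Theta> (g x) + \<Theta> (\<Sum>x\<in>S. g x)"
    using insert.prems by (intro \<Theta>_add) (auto intro: A0_sum)
  then show ?case
    by (simp only: sum.insert[OF insert.hyps] IH)
qed (simp_all add: \<Theta>_zero)

lemma \<Theta>_Lset_zero_slope:
  assumes F: "F \<in> A0 ord" and F_small: "F \<in> Lset ord 0 r"
  shows "\<Theta> F \<in> Lset ord 0 r"
proof (cases "r \<le> 0")
  case True
  then show ?thesis
    by (rule Lset_zero_slope_nonpos)
next
  case False
  define M where "M = nat \<lceil>r\<rceil>"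
  have rM: "r \<le> real M"
    unfolding M_def by linarith
  have "F \<in> Lset ord 0 (real M)"
    using F_small False unfolding M_def Lset_iff ord_ge_def by (auto simp: ceiling_le_iff)
  then obtain H where H: "H \<in> A0 ord" and FH: "F = psmult (\<pi> ^ M) H"
    using A0_pi_power_dvd[OF F] by blast
  have "ord_ge ord (real M) (\<pi> ^ M)"
    using ord_pi_power[of M] by (simp add: ord_ge_def)
  then have "psmult (\<pi> ^ M) (\<Theta> H) \<in> Lset ord 0 (0 + real M)"
    using Lset_zero_slope_nonpos[of 0] by (intro Lset_psmult) auto
  then show ?thesis
    unfolding FH \<Theta>_psmult[OF H] using Lset_antimono[of 0 0 r "real M"] rM by auto
qed

context
  fixes c1 :: real
  assumes \<Theta>_basis: "\<And>u. (\<forall>i. u i < q) \<Longrightarrow> \<Theta> (pmonom u) \<in> Lset ord (q * b) c1"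
begin

lemma Lset_\<Theta>_main_term:
  assumes "ord_ge ord (b * real (deg v) + c) a"
  shows "psmult a (pmult (pmonom (exp_quot v)) (\<Theta> (pmonom (exp_rem v)))) \<in> Lset ord (q * b) (c + c1)"
proof -
  have "pmult (pmonom (exp_quot v)) (\<Theta> (pmonom (exp_rem v)))
          \<in> Lset ord (q * b) (- (q * b) * deg (exp_quot v) + c1)"
    using exp_rem_less by (intro Lset_pmult Lset_pmonom \<Theta>_basis) blast
  then have "psmult a (pmult (pmonom (exp_quot v)) (\<Theta> (pmonom (exp_rem v))))
          \<in> Lset ord (q * b) (- (q * b) * deg (exp_quot v) + c1 + (b * real (deg v) + c))"
    by (rule Lset_psmult[OF assms])
  moreover have "c + c1 \<le> - (q * b) * deg (exp_quot v) + c1 + (b * real (deg v) + c)"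
    unfolding real_deg_rem_quot[of v] using b_pos by (simp add: algebra_simps)
  ultimately show ?thesis
    using Lset_antimono[of "q * b" "q * b" "c + c1"] by blast
qed

lemma \<Theta>_finite_support:
  assumes g: "g \<in> Lset ord b c" and S: "finite S" and g_supp: "\<And>v. v \<notin> S \<Longrightarrow> g v = 0"
  obtains p g' where "p \<in> Lset ord (q * b) (c + c1)" and "g' \<in> Lset ord b (c + q * b)"
    and "\<Theta> g = p + \<Theta> g'"
proof
  define T where "T v = pmult (\<sigma> (pmonom (exp_quot v))) (pmonom (exp_rem v))" for v
  define E where "E v = pmult (frob_defect (exp_quot v)) (pmonom (exp_rem v))" for v
  define Y where "Y = (\<Sum>v\<in>S. psmult (g v) (T v))"
  have coeff: "ord_ge ord (b * real (deg v) + c) (g v)" for v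
    using g by (simp add: Lset_iff)
  have T_A0: "T v \<in> A0 ord" for v
    unfolding T_def by (intro A0_pmult_pmonom \<sigma>_A0 A0_pmonom)
  show g': "- (\<Sum>v\<in>S. psmult (g v) (E v)) \<in> Lset ord b (c + q * b)"
    unfolding E_def by (intro Lset_uminus Lset_sum Lset_defect_term coeff)
  show "(\<Sum>v\<in>S. psmult (g v) (pmult (pmonom (exp_quot v)) (\<Theta> (pmonom (exp_rem v)))))
          \<in> Lset ord (q * b) (c + c1)"
    by (intro Lset_sum Lset_\<Theta>_main_term coeff)
  have "g = (\<Sum>v\<in>S. psmult (g v) (T v - E v))"
    unfolding T_def E_def pmonom_rem_quot[symmetric] using pmonom_sum_eq[OF S g_supp] by simp
  also have "\<dots> = Y + - (\<Sum>v\<in>S. psmult (g v) (E v))"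
    unfolding Y_def by (simp add: psmult_diff[symmetric] sum_subtractf)
  finally have "\<Theta> g = \<Theta> (Y + - (\<Sum>v\<in>S. psmult (g v) (E v)))"
    by (rule arg_cong)
  also have "\<dots> = \<Theta> Y + \<Theta> (- (\<Sum>v\<in>S. psmult (g v) (E v)))"
  proof (rule \<Theta>_add)
    show "Y \<in> A0 ord"
      unfolding Y_def by (intro A0_sum A0_psmult T_A0)
    show "- (\<Sum>v\<in>S. psmult (g v) (E v)) \<in> A0 ord"
      using g' Lset_subset_A0[OF b_pos] by blast
  qed
  moreover have "\<Theta> Y = (\<Sum>v\<in>S. psmult (g v) (pmult (pmonom (exp_quot v)) (\<Theta> (pmonom (exp_rem v)))))"
  proof -
    have "\<Theta> (T v) = pmult (pmonom (exp_quot v)) (\<Theta> (pmonom (exp_rem v)))" for v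
      unfolding T_def by (simp add: \<Theta>_pmult_\<sigma> A0_pmonom)
    then show ?thesis
      unfolding Y_def by (simp add: \<Theta>_sum A0_psmult T_A0 \<Theta>_psmult)
  qed
  ultimately show "\<Theta> g = (\<Sum>v\<in>S. psmult (g v) (pmult (pmonom (exp_quot v)) (\<Theta> (pmonom (exp_rem v)))))
                      + \<Theta> (- (\<Sum>v\<in>S. psmult (g v) (E v)))"
    by simp
qed

lemma \<Theta>_Lset_step:
  assumes g: "g \<in> Lset ord b c"
  obtains p g' e where "p \<in> Lset ord (q * b) (c + c1)" and "g' \<in> Lset ord b (c + q * b)"
    and "e \<in> Lset ord 0 r" and "\<Theta> g = p + \<Theta> g' + e"
proof -
  obtain S where S: "finite S" and tail: "(\<lambda>v. if v \<notin> S then g v else 0) \<in> Lset ord 0 r"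
    using A0_small_outside_finite g Lset_subset_A0[OF b_pos] by blast
  define head where "head = (\<lambda>v. if v \<in> S then g v else 0)"
  define rest where "rest = (\<lambda>v. if v \<notin> S then g v else 0)"
  have head: "head \<in> Lset ord b c" and rest: "rest \<in> Lset ord b c"
    unfolding head_def rest_def using g by (auto intro: Lset_restrict)
  then have "head \<in> A0 ord" and rest_A0: "rest \<in> A0 ord"
    using Lset_subset_A0[OF b_pos] by blast+
  moreover have "g = head + rest"
    by (simp add: head_def rest_def fun_eq_iff)
  ultimately have \<Theta>_g: "\<Theta> g = \<Theta> head + \<Theta> rest"
    using \<Theta>_add by simp
  obtain p g' where "p \<in> Lset ord (q * b) (c + c1)" and "g' \<in> Lset ord b (c + q * b)"
    and "\<Theta> head = p + \<Theta> g'"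
    using \<Theta>_finite_support[OF head S] unfolding head_def by auto
  moreover have "\<Theta> rest \<in> Lset ord 0 r"
    using \<Theta>_Lset_zero_slope[OF rest_A0] tail unfolding rest_def by blast
  ultimately show thesis
    using that \<Theta>_g by metis
qed

lemma \<Theta>_Lset_approx:
  "g \<in> Lset ord b c \<Longrightarrow> \<exists>p\<in>Lset ord (q * b) (c + c1). \<Theta> g - p \<in> Lset ord 0 (c + real K * (q * b))"
proof (induction K arbitrary: c g)
  case 0
  then have "g \<in> Lset ord 0 c" and "g \<in> A0 ord"
    using Lset_antimono[of 0 b c c] Lset_subset_A0[OF b_pos] b_pos by auto
  then have "\<Theta> g - 0 \<in> Lset ord 0 c"
    using \<Theta>_Lset_zero_slope by simp
  with Lset_zero show ?case
    by (metis add.right_neutral mult_zero_left of_nat_0)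
next
  case (Suc K)
  define r where "r = c + real (Suc K) * (q * b)"
  obtain p0 g' e where p0: "p0 \<in> Lset ord (q * b) (c + c1)" and g': "g' \<in> Lset ord b (c + q * b)"
    and e: "e \<in> Lset ord 0 r" and \<Theta>_g: "\<Theta> g = p0 + \<Theta> g' + e"
    using \<Theta>_Lset_step[OF Suc.prems] by blast
  have "c + q * b + real K * (q * b) = r"
    by (simp add: r_def algebra_simps)
  then obtain p' where p': "p' \<in> Lset ord (q * b) (c + q * b + c1)"
    and \<Theta>_g': "\<Theta> g' - p' \<in> Lset ord 0 r"
    using Suc.IH[OF g'] by metis
  have "p0 + p' \<in> Lset ord (q * b) (c + c1)"
    using p0 p' Lset_antimono[of "q * b" "q * b" "c + c1" "c + q * b + c1"] b_pos
    by (auto intro: Lset_add)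
  moreover have "\<Theta> g - (p0 + p') = (\<Theta> g' - p') + e"
    unfolding \<Theta>_g by (simp add: algebra_simps)
  moreover have "(\<Theta> g' - p') + e \<in> Lset ord 0 r"
    using \<Theta>_g' e by (rule Lset_add)
  ultimately show ?case
    unfolding r_def by metis
qed

lemma \<Theta>_Lset:
  assumes g: "g \<in> Lset ord b c"
  shows "\<Theta> g \<in> Lset ord (q * b) (c + c1)"
proof (rule Lset_closed)
  fix N
  define K where "K = nat \<lceil>(N - c) / (q * b)\<rceil>"
  have qb: "0 < q * b"
    using q_pos b_pos by simp
  have "(N - c) / (q * b) \<le> K"
    unfolding K_def by linarith
  then have N: "N \<le> c + K * (q * b)"
    using qb by (simp add: divide_le_eq algebra_simps)
  obtain p where "p \<in> Lset ord (q * b) (c + c1)" and "\<Theta> g - p \<in> Lset ord 0 (c + K * (q * b))"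
    using \<Theta>_Lset_approx[OF g] by blast
  then show "\<exists>p\<in>Lset ord (q * b) (c + c1). \<Theta> g - p \<in> Lset ord 0 N"
    using Lset_antimono[OF order_refl N] by blast
qed

end

end

theorem theorem4p6:
  fixes ord :: "'a::{comm_ring_1,ring_char_0} \<Rightarrow> int" and \<pi> :: 'a and q :: nat
    and \<sigma> \<Theta> :: "(('n::finite \<Rightarrow> nat) \<Rightarrow> 'a) \<Rightarrow> (('n \<Rightarrow> nat) \<Rightarrow> 'a)"
    and f :: "'n \<Rightarrow> ('n \<Rightarrow> nat) \<Rightarrow> 'a"
    and b_\<sigma> b c1 :: rat
  assumes R: "complete_dvr ord \<pi> q"
    and f_A: "\<forall>i. f i \<in> Aoc ord"
    and b\<sigma>_pos: "b_\<sigma> > 0"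
    and f_L: "\<forall>i. psmult \<pi> (f i) \<in> Lset ord (of_rat b_\<sigma>) 0"
    and \<sigma>_endo: "R_alg_endo ord \<sigma>"
    and \<sigma>_X: "\<forall>i. \<sigma> (pvar i) = padd (ppow (pvar i) q) (psmult \<pi> (f i))"
    and \<Theta>_dwork: "dwork_op ord \<sigma> \<Theta>"
    and \<Theta>_oc: "overconvergent ord \<Theta>"
    and b_pos: "0 < b" and b_le: "b \<le> b_\<sigma>"
    and \<Theta>_basis: "\<forall>u. (\<forall>i. u i < q) \<longrightarrow>
                    \<Theta> (pmonom u) \<in> Lset ord (of_rat (of_nat q * b)) (of_rat c1)"
  shows "\<forall>c::real. \<Theta> ` Lset ord (of_rat b) c \<subseteq> Lset ord (of_rat (of_nat q * b)) (c + of_rat c1)"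
proof -
  have vr: "valued_ring ord \<pi>"
    using R by (rule complete_dvr_valued_ring)
  have \<sigma>_pvar: "\<sigma> (pvar i) - ppow (pvar i) q \<in> Lset ord (of_rat b) 0" for i
  proof -
    have "\<sigma> (pvar i) - ppow (pvar i) q = psmult \<pi> (f i)"
      using \<sigma>_X by (simp add: padd_eq_plus)
    moreover have "Lset ord (of_rat b_\<sigma>) 0 \<subseteq> (Lset ord (of_rat b) 0 :: (('n \<Rightarrow> nat) \<Rightarrow> 'a) set)"
      using b_le by (intro Lset_antimono) (simp_all add: of_rat_less_eq)
    ultimately show ?thesis
      using f_L by auto
  qed
  interpret dwork_operator ord \<pi> \<sigma> q "of_rat b" \<Theta>
    using vr \<sigma>_endo \<sigma>_pvar \<Theta>_dwork complete_dvr_residue_card_pos[OF R] b_pos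
    by (simp add: dwork_operator_def frobenius_lift_def frobenius_lift_axioms_def
        dwork_operator_axioms_def)
  have "\<Theta> (pmonom u) \<in> Lset ord (q * of_rat b) (of_rat c1)" if "\<forall>i. u i < q" for u
    using \<Theta>_basis that by (simp add: of_rat_mult)
  then show ?thesis
    using \<Theta>_Lset by (auto simp: of_rat_mult)
qed

end
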